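(* Let $S$ and $Z$ be finite nonempty alphabets with $\#Z\le \#S$, let $\tau:S\to Z$ be surjective, and let $(\Sigma,\sigma_\tau)$ be the associated full zip shift space. Then the set of periodic points of $\sigma_\tau$ (points $p\in\Sigma$ with $\sigma_\tau^n(p)=p$ for some $n\ge 1$) is dense in $\Sigma$.
   Context: The zip shift space is $\Sigma=\Sigma_{Z,S}$, the set of bi-infinite sequences $x=(x_i)_{i\in\mathbb{Z}}$ with $x_i\in S$ for all $i\ge 0$ and $x_i\in Z$ for all $i<0$. It carries the metric $d(x,y)=2^{-M(x,y)}$, where $M(x,y)=\min\{|i| : x_i\neq y_i\}$ (and $d(x,x)=0$); cylinder sets $[s_i\cdots s_{i+\ell}]=\{x\in\Sigma: x_j=s_j,\ i\le j\le i+\ell\}$ form a basis of the topology. The (full) zip shift map $\sigma_\tau:\Sigma\to\Sigma$ is defined by $(\sigma_\tau x)_i=x_{i+1}$ for all $i\neq -1$ and $(\sigma_\tau x)_{-1}=\tau(x_0)$; i.e. $\sigma_\tau(\cdots x_{-2}x_{-1}.x_0x_1x_2\cdots)=(\cdots x_{-2}x_{-1}\tau(x_0).x_1x_2\cdots)$. *)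

theory Defs
  imports "HOL-Analysis.Analysis"
begin

definition zip_space :: "'a set \<Rightarrow> 'a set \<Rightarrow> (int \<Rightarrow> 'a) set" where
  "zip_space Z S = {x. (\<forall>i\<ge>0. x i \<in> S) \<and> (\<forall>i<0. x i \<in> Z)}"

definition zip_M :: "(int \<Rightarrow> 'a) \<Rightarrow> (int \<Rightarrow> 'a) \<Rightarrow> nat" where
  "zip_M x y = (LEAST n. \<exists>i. nat \<bar>i\<bar> = n \<and> x i \<noteq> y i)"

definition zip_dist :: "(int \<Rightarrow> 'a) \<Rightarrow> (int \<Rightarrow> 'a) \<Rightarrow> real" where
  "zip_dist x y = (if x = y then 0 else 2 powr (- real (zip_M x y)))"

definition zip_shift :: "('a \<Rightarrow> 'a) \<Rightarrow> (int \<Rightarrow> 'a) \<Rightarrow> (int \<Rightarrow> 'a)" where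
  "zip_shift \<tau> x = (\<lambda>i. if i = -1 then \<tau> (x 0) else x (i + 1))"

definition zip_periodic_points :: "'a set \<Rightarrow> 'a set \<Rightarrow> ('a \<Rightarrow> 'a) \<Rightarrow> (int \<Rightarrow> 'a) set" where
  "zip_periodic_points Z S \<tau> =
     {p \<in> zip_space Z S. \<exists>n::nat. n \<ge> 1 \<and> (zip_shift \<tau> ^^ n) p = p}"

definition zip_dense :: "'a set \<Rightarrow> 'a set \<Rightarrow> (int \<Rightarrow> 'a) set \<Rightarrow> bool" where
  "zip_dense Z S A \<longleftrightarrow> A \<subseteq> zip_space Z S \<and>
     (\<forall>x\<in>zip_space Z S. \<forall>e>0. \<exists>p\<in>A. zip_dist x p < e)"

end

theory Submission
  imports Defs
begin

text \<open>Repeating a word w over S of length n along the nonnegative coordinates, and its image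
  under \<tau> along the negative ones, gives a point fixed by the n-th iterate of the zip shift.
  To approximate x within 2^-N take n = 2N + 1 and let w copy x_0 ... x_N followed by lifts of
  x_-N ... x_-1 through a right inverse of \<tau>: the resulting periodic point agrees with x on
  all |i| \<le> N.\<close>

lemma zip_shift_funpow:
  "(zip_shift \<tau> ^^ k) x i =
     (if - int k \<le> i \<and> i < 0 then \<tau> (x (i + int k)) else x (i + int k))"
proof (induction k arbitrary: i)
  case 0
  then show ?case by auto
next
  case (Suc k)
  show ?case
    using Suc[of 0] Suc[of "i + 1"] by (auto simp: zip_shift_def algebra_simps)
qed

lemma zip_M_attained:
  assumes "x \<noteq> y"
  obtains j where "nat \<bar>j\<bar> = zip_M x y" and "x j \<noteq> y j"
proof -
  from assms obtain i where "x i \<noteq> y i" by auto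
  then have "\<exists>m j. nat \<bar>j\<bar> = m \<and> x j \<noteq> y j" by blast
  then have "\<exists>j. nat \<bar>j\<bar> = zip_M x y \<and> x j \<noteq> y j"
    unfolding zip_M_def by (rule LeastI_ex)
  then show ?thesis using that by blast
qed

lemma zip_dist_le_if_agree:
  assumes "\<And>i. \<bar>i\<bar> < int N \<Longrightarrow> x i = y i"
  shows "zip_dist x y \<le> (1/2) ^ N"
proof (cases "x = y")
  case True
  then show ?thesis by (simp add: zip_dist_def)
next
  case False
  then obtain j where j: "nat \<bar>j\<bar> = zip_M x y" "x j \<noteq> y j"
    by (rule zip_M_attained)
  have "N \<le> zip_M x y"
  proof (rule ccontr)
    assume "\<not> N \<le> zip_M x y"
    then have "\<bar>j\<bar> < int N" using j(1) by linarith
    then show False using assms j(2) by blast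
  qed
  have "zip_dist x y = (1/2) ^ zip_M x y"
    using False by (simp add: zip_dist_def powr_minus powr_realpow power_one_over inverse_eq_divide)
  also have "\<dots> \<le> (1/2) ^ N"
    using \<open>N \<le> zip_M x y\<close> by (rule power_decreasing) auto
  finally show ?thesis .
qed

definition zip_periodic_extension :: "('a \<Rightarrow> 'a) \<Rightarrow> nat \<Rightarrow> (int \<Rightarrow> 'a) \<Rightarrow> int \<Rightarrow> 'a" where
  "zip_periodic_extension \<tau> n w i = (if 0 \<le> i then w (i mod int n) else \<tau> (w (i mod int n)))"

lemma zip_periodic_extension_in_zip_space:
  assumes "n > 0" and "\<And>j. 0 \<le> j \<Longrightarrow> j < int n \<Longrightarrow> w j \<in> S" and "\<tau> ` S \<subseteq> Z"
  shows "zip_periodic_extension \<tau> n w \<in> zip_space Z S"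
proof -
  have "w (i mod int n) \<in> S" for i
    using assms(1,2) by simp
  then show ?thesis
    using assms(3) by (auto simp: zip_space_def zip_periodic_extension_def)
qed

lemma zip_shift_funpow_periodic_extension:
  "(zip_shift \<tau> ^^ n) (zip_periodic_extension \<tau> n w) = zip_periodic_extension \<tau> n w"
proof
  fix i
  have "(i + int n) mod int n = i mod int n" by simp
  then show "(zip_shift \<tau> ^^ n) (zip_periodic_extension \<tau> n w) i = zip_periodic_extension \<tau> n w i"
    by (auto simp: zip_shift_funpow zip_periodic_extension_def)
qed

lemma zip_periodic_extension_in_periodic_points:
  assumes "n > 0" and "\<And>j. 0 \<le> j \<Longrightarrow> j < int n \<Longrightarrow> w j \<in> S" and "\<tau> ` S \<subseteq> Z"
  shows "zip_periodic_extension \<tau> n w \<in> zip_periodic_points Z S \<tau>"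
proof -
  have "(zip_shift \<tau> ^^ n) (zip_periodic_extension \<tau> n w) = zip_periodic_extension \<tau> n w"
    by (rule zip_shift_funpow_periodic_extension)
  then show ?thesis
    using zip_periodic_extension_in_zip_space[OF assms] \<open>n > 0\<close>
    by (auto simp: zip_periodic_points_def Suc_le_eq)
qed

lemma zip_periodic_point_agreeing_near_origin:
  fixes N :: nat
  assumes x: "x \<in> zip_space Z S" and \<tau>: "\<tau> ` S = Z"
  obtains p where "p \<in> zip_periodic_points Z S \<tau>" and "\<And>i. \<bar>i\<bar> \<le> int N \<Longrightarrow> p i = x i"
proof
  define n where "n = 2 * N + 1"
  define w where "w j = (if j \<le> int N then x j else inv_into S \<tau> (x (j - int n)))" for j
  have "w j \<in> S" if "0 \<le> j" "j < int n" for j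
  proof (cases "j \<le> int N")
    case True
    then show ?thesis using x that by (simp add: w_def zip_space_def)
  next
    case False
    then have "x (j - int n) \<in> \<tau> ` S"
      using x that \<tau> by (simp add: zip_space_def)
    then show ?thesis using False by (simp add: w_def inv_into_into)
  qed
  then show "zip_periodic_extension \<tau> n w \<in> zip_periodic_points Z S \<tau>"
    using \<tau> by (intro zip_periodic_extension_in_periodic_points) (auto simp: n_def)
  fix i :: int
  assume i: "\<bar>i\<bar> \<le> int N"
  show "zip_periodic_extension \<tau> n w i = x i"
  proof (cases "0 \<le> i")
    case True
    then have "i mod int n = i" using i by (simp add: n_def)
    then show ?thesis using True i by (simp add: zip_periodic_extension_def w_def)
  next
    case False
    have "i mod int n = (i + int n) mod int n" by simp
    also have "\<dots> = i + int n"
      using i False by (intro mod_pos_pos_trivial) (auto simp: n_def)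
    finally have "i mod int n = i + int n" .
    moreover have "x i \<in> \<tau> ` S"
      using x False \<tau> by (simp add: zip_space_def)
    ultimately show ?thesis
      using False i by (simp add: zip_periodic_extension_def w_def n_def f_inv_into_f)
  qed
qed

theorem theorem1:
  fixes S Z :: "'a set" and \<tau> :: "'a \<Rightarrow> 'a"
  assumes "finite S" and "S \<noteq> {}" and "finite Z" and "Z \<noteq> {}"
    and "card Z \<le> card S"
    and "\<tau> ` S = Z"
  shows "zip_dense Z S (zip_periodic_points Z S \<tau>)"
  unfolding zip_dense_def
proof (intro conjI ballI allI impI)
  show "zip_periodic_points Z S \<tau> \<subseteq> zip_space Z S"
    by (auto simp: zip_periodic_points_def)
next
  fix x and e :: real
  assume "x \<in> zip_space Z S" and "0 < e"
  obtain N :: nat where N: "(1/2) ^ N < e"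
    using real_arch_pow_inv[OF \<open>0 < e\<close>] by fastforce
  obtain p where p: "p \<in> zip_periodic_points Z S \<tau>" and "\<And>i. \<bar>i\<bar> \<le> int N \<Longrightarrow> p i = x i"
    using zip_periodic_point_agreeing_near_origin[OF \<open>x \<in> zip_space Z S\<close> \<open>\<tau> ` S = Z\<close>] by blast
  then have "zip_dist x p \<le> (1/2) ^ N"
    by (intro zip_dist_le_if_agree) auto
  with N p show "\<exists>p\<in>zip_periodic_points Z S \<tau>. zip_dist x p < e" by force
qed

end
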